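(* Let $d\geq 2$. Every antipodal configuration $\omega_{2d}=\{\mathbf x_1,\ldots,\mathbf x_{2d}\}$ of $2d$ points on $S^{d-1}\subset\mathbb R^d$ is centered, i.e. there exists $\mathbf y\in S^{d-1}$ with $-\frac{1}{\sqrt d}\leq \mathbf y\cdot\mathbf x_i\leq\frac1{\sqrt d}$ for all $i=1,\ldots,2d$.
   Context: $S^{d-1}$ is the unit sphere in $\mathbb R^d$. A configuration is a list of points (points may coincide). A configuration on $S^{d-1}$ is antipodal if together with a point $\mathbf x$ it contains $-\mathbf x$. *)

theory Defs
  imports "HOL-Analysis.Analysis"
begin

definition antipodal_config :: "nat \<Rightarrow> (nat \<Rightarrow> 'a::real_normed_vector) \<Rightarrow> bool" where
  "antipodal_config N x \<longleftrightarrow> (\<forall>i<N. \<exists>j<N. x j = - x i)"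

end

theory Submission
  imports Defs
begin

text \<open>Keep one point from each antipodal pair; this leaves at most \<open>d\<close> unit vectors \<open>t\<close>,
  and it suffices to find a unit vector \<open>y\<close> with \<open>\<bar>y \<bullet> t\<bar> \<le> 1 / sqrt d\<close> for each of them.
  If they do not span \<open>\<real>\<^sup>d\<close>, a unit vector orthogonal to all of them does. Otherwise they form
  a basis; its dual basis vectors \<open>w\<^sub>t\<close> have norm at least 1 by Cauchy-Schwarz, and signs
  chosen greedily make \<open>z = \<Sum> \<plusminus>w\<^sub>t\<close> satisfy \<open>\<parallel>z\<parallel>\<^sup>2 \<ge> \<Sum> \<parallel>w\<^sub>t\<parallel>\<^sup>2 \<ge> d\<close>. Since \<open>z \<bullet> t = \<plusminus>1\<close>,
  the vector \<open>y = z / \<parallel>z\<parallel>\<close> works.\<close>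

lemma sum_norm_squared_le_signed_sum:
  fixes w :: "'b \<Rightarrow> 'a::real_inner"
  assumes "finite F"
  shows "\<exists>e. (\<forall>t\<in>F. \<bar>e t\<bar> = 1) \<and>
    (\<Sum>t\<in>F. (norm (w t))\<^sup>2) \<le> (norm (\<Sum>t\<in>F. e t *\<^sub>R w t))\<^sup>2"
  using assms
proof (induction F rule: finite_induct)
  case empty
  show ?case by simp
next
  case (insert a F)
  then obtain e where e: "\<forall>t\<in>F. \<bar>e t\<bar> = 1"
    and IH: "(\<Sum>t\<in>F. (norm (w t))\<^sup>2) \<le> (norm (\<Sum>t\<in>F. e t *\<^sub>R w t))\<^sup>2"
    by blast
  define S where "S = (\<Sum>t\<in>F. e t *\<^sub>R w t)"
  define s :: real where "s = (if S \<bullet> w a \<ge> 0 then 1 else -1)"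
  have "(\<Sum>t\<in>F. (e(a := s)) t *\<^sub>R w t) = S"
    unfolding S_def using insert.hyps(2) by (intro sum.cong) auto
  then have sum_insert: "(\<Sum>t\<in>insert a F. (e(a := s)) t *\<^sub>R w t) = s *\<^sub>R w a + S"
    using insert.hyps by simp
  have "(norm (s *\<^sub>R w a + S))\<^sup>2 = (norm (w a))\<^sup>2 + (norm S)\<^sup>2 + 2 * (s * (S \<bullet> w a))"
    unfolding power2_norm_eq_inner s_def
    by (simp add: inner_add_left inner_add_right inner_commute algebra_simps)
  moreover have "s * (S \<bullet> w a) \<ge> 0"
    unfolding s_def by auto
  ultimately have "(\<Sum>t\<in>insert a F. (norm (w t))\<^sup>2)
      \<le> (norm (\<Sum>t\<in>insert a F. (e(a := s)) t *\<^sub>R w t))\<^sup>2"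
    using insert.hyps IH sum_insert unfolding S_def by simp
  moreover have "\<forall>t\<in>insert a F. \<bar>(e(a := s)) t\<bar> = 1"
    using e unfolding s_def by auto
  ultimately show ?case by blast
qed

lemma dual_vector_exists:
  fixes x :: "'a::euclidean_space"
  assumes "x \<notin> span S"
  obtains w where "w \<bullet> x = 1" and "\<And>s. s \<in> S \<Longrightarrow> w \<bullet> s = 0"
proof -
  obtain y z where y: "y \<in> span S" and z: "\<And>v. v \<in> span S \<Longrightarrow> orthogonal z v"
    and x: "x = y + z"
    using orthogonal_subspace_decomp_exists[of S x] by blast
  have "z \<bullet> x = z \<bullet> z"
    using z[OF y] unfolding x orthogonal_def by (simp add: inner_add_right)
  moreover have "z \<noteq> 0"
    using assms x y by auto
  moreover have "z \<bullet> s = 0" if "s \<in> S" for s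
    using z[OF span_base[OF that]] by (simp add: orthogonal_def)
  ultimately show ?thesis
    by (intro that[of "z /\<^sub>R (z \<bullet> z)"]) auto
qed

lemma independent_unit_vectors_signed_dual:
  fixes T :: "'a::euclidean_space set"
  assumes indep: "independent T" and unit: "\<And>t. t \<in> T \<Longrightarrow> norm t = 1"
  shows "\<exists>z. (\<forall>t\<in>T. \<bar>z \<bullet> t\<bar> = 1) \<and> real (card T) \<le> (norm z)\<^sup>2"
proof -
  have fin: "finite T"
    using indep by (rule finiteI_independent)
  have "\<exists>w. w \<bullet> t = 1 \<and> (\<forall>s\<in>T - {t}. w \<bullet> s = 0)" if "t \<in> T" for t
  proof -
    have "t \<notin> span (T - {t})"
      using indep that unfolding dependent_def by blast
    then obtain w where "w \<bullet> t = 1" and "\<And>s. s \<in> T - {t} \<Longrightarrow> w \<bullet> s = 0"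
      using dual_vector_exists[of t "T - {t}"] by blast
    then show ?thesis
      by blast
  qed
  then obtain w where w_self: "\<And>t. t \<in> T \<Longrightarrow> w t \<bullet> t = 1"
    and w_other: "\<And>t s. t \<in> T \<Longrightarrow> s \<in> T \<Longrightarrow> s \<noteq> t \<Longrightarrow> w t \<bullet> s = 0"
    by (metis DiffI singletonD)
  obtain e where e: "\<forall>t\<in>T. \<bar>e t\<bar> = 1"
    and e_sum: "(\<Sum>t\<in>T. (norm (w t))\<^sup>2) \<le> (norm (\<Sum>t\<in>T. e t *\<^sub>R w t))\<^sup>2"
    using sum_norm_squared_le_signed_sum[OF fin] by blast
  define z where "z = (\<Sum>t\<in>T. e t *\<^sub>R w t)"
  have "z \<bullet> t = e t" if "t \<in> T" for t
  proof -
    have "z \<bullet> t = (\<Sum>s\<in>T. e s * (w s \<bullet> t))"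
      unfolding z_def by (simp add: inner_sum_left)
    also have "\<dots> = e t * (w t \<bullet> t)"
    proof -
      have "(\<Sum>s\<in>T - {t}. e s * (w s \<bullet> t)) = 0"
        using w_other that by (intro sum.neutral ballI) (metis DiffE singletonI mult_zero_right)
      then show ?thesis
        using sum.remove[OF fin that, of "\<lambda>s. e s * (w s \<bullet> t)"] by simp
    qed
    finally show ?thesis
      using w_self[OF that] by simp
  qed
  then have "\<forall>t\<in>T. \<bar>z \<bullet> t\<bar> = 1"
    using e by simp
  moreover have "1 \<le> norm (w t)" if "t \<in> T" for t
    using norm_cauchy_schwarz[of "w t" t] w_self[OF that] unit[OF that] by simp
  then have "real (card T) \<le> (\<Sum>t\<in>T. (norm (w t))\<^sup>2)"
    using sum_mono[of T "\<lambda>_. 1::real"] by (simp add: one_le_power)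
  then have "real (card T) \<le> (norm z)\<^sup>2"
    using e_sum unfolding z_def by linarith
  ultimately show ?thesis
    by blast
qed

lemma unit_vector_small_inner_exists:
  fixes T :: "'a::euclidean_space set"
  assumes fin: "finite T" and card: "card T \<le> DIM('a)"
    and unit: "\<And>t. t \<in> T \<Longrightarrow> norm t = 1"
  shows "\<exists>y. norm y = 1 \<and> (\<forall>t\<in>T. \<bar>y \<bullet> t\<bar> \<le> 1 / sqrt DIM('a))"
proof (cases "span T = UNIV")
  case False
  then obtain a where "a \<noteq> 0" and a: "\<forall>v\<in>span T. a \<bullet> v = 0"
    using span_not_UNIV_orthogonal by blast
  have "(a /\<^sub>R norm a) \<bullet> t = 0" if "t \<in> T" for t
    using a that by (simp add: span_base)
  then show ?thesis
    using \<open>a \<noteq> 0\<close> by (intro exI[of _ "a /\<^sub>R norm a"]) simp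
next
  case True
  have "DIM('a) \<le> card T"
    using dim_le_card[of UNIV T] True fin by simp
  with card have card_T: "card T = DIM('a)"
    by simp
  have "independent T"
    using card_le_dim_spanning[of T UNIV] True fin card by simp
  then have "\<exists>z. (\<forall>t\<in>T. \<bar>z \<bullet> t\<bar> = 1) \<and> real (card T) \<le> (norm z)\<^sup>2"
    using unit by (rule independent_unit_vectors_signed_dual)
  then obtain z where z: "\<forall>t\<in>T. \<bar>z \<bullet> t\<bar> = 1" and z_sq: "real DIM('a) \<le> (norm z)\<^sup>2"
    using card_T by auto
  have sqrt_le: "sqrt DIM('a) \<le> norm z"
    using real_le_lsqrt[OF norm_ge_zero z_sq] .
  have sqrt_pos: "0 < sqrt DIM('a)"
    by simp
  have norm_z: "0 < norm z" "1 / norm z \<le> 1 / sqrt DIM('a)"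
    using sqrt_le sqrt_pos by (linarith, simp add: frac_le)
  have "\<bar>(z /\<^sub>R norm z) \<bullet> t\<bar> = 1 / norm z" if "t \<in> T" for t
    using z that by (simp add: abs_mult divide_inverse)
  then show ?thesis
    using norm_z by (intro exI[of _ "z /\<^sub>R norm z"]) simp
qed

lemma neg_eq_self_iff_zero:
  fixes s :: "'a::real_vector"
  shows "- s = s \<longleftrightarrow> s = 0"
proof
  assume "- s = s"
  then have "(2::real) *\<^sub>R s = 0"
    by (metis add.right_inverse scaleR_2)
  then show "s = 0"
    by simp
qed simp

lemma symmetric_set_half_cover:
  fixes S :: "'a::real_vector set"
  assumes "finite S" and "0 \<notin> S" and "\<And>s. s \<in> S \<Longrightarrow> - s \<in> S"
  shows "\<exists>T\<subseteq>S. S \<subseteq> T \<union> uminus ` T \<and> 2 * card T \<le> card S"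
  using assms
proof (induction S rule: finite_psubset_induct)
  case (psubset S)
  show ?case
  proof (cases "S = {}")
    case True
    then show ?thesis by simp
  next
    case False
    then obtain s where s: "s \<in> S" by blast
    have "- s \<in> S"
      using psubset.prems(2) s .
    have "s \<noteq> - s"
      using psubset.prems(1) s neg_eq_self_iff_zero by metis
    define S' where "S' = S - {s, - s}"
    have pair: "{s, - s} \<subseteq> S" "card {s, - s} = 2"
      using s \<open>- s \<in> S\<close> \<open>s \<noteq> - s\<close> by auto
    then have "2 \<le> card S"
      using card_mono[OF psubset.hyps(1) pair(1)] by simp
    then have card_S: "card S = card S' + 2"
      unfolding S'_def using pair by (simp add: card_Diff_subset)
    have "S' \<subset> S"
      unfolding S'_def using s by auto
    moreover have "0 \<notin> S'"
      unfolding S'_def using psubset.prems(1) by blast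
    moreover have "- r \<in> S'" if "r \<in> S'" for r
      using that unfolding S'_def using psubset.prems(2) by auto
    ultimately have "\<exists>T'\<subseteq>S'. S' \<subseteq> T' \<union> uminus ` T' \<and> 2 * card T' \<le> card S'"
      by (rule psubset.IH)
    then obtain T' where T': "T' \<subseteq> S'" "S' \<subseteq> T' \<union> uminus ` T'" "2 * card T' \<le> card S'"
      by blast
    have "finite T'"
      using T'(1) psubset.hyps(1) finite_subset unfolding S'_def by blast
    moreover have "s \<notin> T'"
      using T'(1) unfolding S'_def by blast
    ultimately have "2 * card (insert s T') \<le> card S"
      using T'(3) card_S by simp
    moreover have "insert s T' \<subseteq> S"
      using T'(1) s unfolding S'_def by blast
    moreover have "S \<subseteq> insert s T' \<union> uminus ` insert s T'"
      using T'(2) unfolding S'_def by auto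
    ultimately show ?thesis
      by blast
  qed
qed

lemma antipodal_config_image_symmetric:
  assumes "antipodal_config N x" and "s \<in> x ` {..<N}"
  shows "- s \<in> x ` {..<N}"
proof -
  obtain i where "i < N" and "s = x i"
    using assms(2) by blast
  then obtain j where "j < N" and "x j = - s"
    using assms(1) unfolding antipodal_config_def by blast
  then show ?thesis
    by force
qed

theorem corollary3p2:
  fixes x :: "nat \<Rightarrow> real ^ 'n"
  assumes "CARD('n) \<ge> 2"
    and "\<forall>i<2 * CARD('n). norm (x i) = 1"
    and "antipodal_config (2 * CARD('n)) x"
  shows "\<exists>y :: real ^ 'n. norm y = 1 \<and>
           (\<forall>i<2 * CARD('n). - 1 / sqrt (real CARD('n)) \<le> y \<bullet> x i \<and>
                              y \<bullet> x i \<le> 1 / sqrt (real CARD('n)))"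
proof -
  define S where "S = x ` {..<2 * CARD('n)}"
  have unit: "\<And>s. s \<in> S \<Longrightarrow> norm s = 1"
    using assms(2) unfolding S_def by auto
  have "finite S" and "card S \<le> 2 * CARD('n)"
    unfolding S_def using card_image_le[of "{..<2 * CARD('n)}" x] by auto
  moreover have "0 \<notin> S"
    using unit by force
  moreover have "\<And>s. s \<in> S \<Longrightarrow> - s \<in> S"
    using antipodal_config_image_symmetric[OF assms(3)] unfolding S_def .
  ultimately obtain T where T: "T \<subseteq> S" "S \<subseteq> T \<union> uminus ` T" "card T \<le> DIM(real ^ 'n)"
    using symmetric_set_half_cover[of S] by fastforce
  then obtain y where "norm y = 1" and y: "\<forall>t\<in>T. \<bar>y \<bullet> t\<bar> \<le> 1 / sqrt CARD('n)"
    using unit_vector_small_inner_exists[of T] unit finite_subset[OF T(1) \<open>finite S\<close>] by auto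
  moreover have "- 1 / sqrt CARD('n) \<le> y \<bullet> x i \<and> y \<bullet> x i \<le> 1 / sqrt CARD('n)"
    if "i < 2 * CARD('n)" for i
  proof -
    have "\<bar>y \<bullet> x i\<bar> \<le> 1 / sqrt CARD('n)"
      using T(2) y that unfolding S_def by auto
    then show ?thesis
      by arith
  qed
  ultimately show ?thesis
    by blast
qed

end
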